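(* Let $X$ be a proper geodesic metric space with horofunction boundary $\partial_hX$ (based at $o$). Let $\alpha,\beta:[0,\infty)\to X$ be geodesic rays emanating from $o$, ending at $\alpha^+,\beta^+\in\partial_hX$. Suppose there are sequences of real numbers $s_n,r_n\to\infty$ such that $\limsup_{n\to\infty}r_n/s_n<1$ and, for all sufficiently large $n$, $\limsup_{t\to\infty}d(o,[\alpha(s_n),\beta(t)])\le r_n$ (for some choice of geodesic segments $[\alpha(s_n),\beta(t)]$). Then $[\alpha^+]_s\ne[\beta^+]_s$.
   Context: For $y\in X$, $b_y(x)=d(x,y)-d(o,y)$; $\partial_hX$ consists of pointwise limits $b_\xi=\lim b_{y_n}$ along unbounded sequences $y_n$. A geodesic ray $\alpha$ converges to $\alpha^+$ with horofunction $\alpha^+(x)=\lim_{t\to\infty}[d(\alpha(t),x)-t]$. Two boundary points $\xi,\eta$ have sublinear difference, written $[\xi]_s=[\eta]_s$, if $\lim_{n\to\infty}\sup_{d(o,x)\ge n}\frac{|b_\xi(x)-b_\eta(x)|}{d(o,x)}=0$. *)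

theory Defs
  imports "HOL-Analysis.Analysis"
begin

definition proper_space :: "'a::metric_space itself \<Rightarrow> bool" where
  "proper_space _ \<longleftrightarrow> (\<forall>(x::'a) r. compact (cball x r))"

definition geodesic_segment :: "(real \<Rightarrow> 'a::metric_space) \<Rightarrow> 'a \<Rightarrow> 'a \<Rightarrow> bool" where
  "geodesic_segment \<gamma> x y \<longleftrightarrow> \<gamma> 0 = x \<and> \<gamma> (dist x y) = y \<and>
     (\<forall>s\<in>{0..dist x y}. \<forall>t\<in>{0..dist x y}. dist (\<gamma> s) (\<gamma> t) = \<bar>s - t\<bar>)"

definition geodesic_space :: "'a::metric_space itself \<Rightarrow> bool" where
  "geodesic_space _ \<longleftrightarrow> (\<forall>x y::'a. \<exists>\<gamma>. geodesic_segment \<gamma> x y)"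

definition geodesic_ray :: "(real \<Rightarrow> 'a::metric_space) \<Rightarrow> 'a \<Rightarrow> bool" where
  "geodesic_ray \<alpha> x0 \<longleftrightarrow> \<alpha> 0 = x0 \<and>
     (\<forall>s\<ge>0. \<forall>t\<ge>0. dist (\<alpha> s) (\<alpha> t) = \<bar>s - t\<bar>)"

definition ray_horofunction :: "(real \<Rightarrow> 'a::metric_space) \<Rightarrow> 'a \<Rightarrow> real" where
  "ray_horofunction \<alpha> x = Lim at_top (\<lambda>t. dist (\<alpha> t) x - t)"

definition sublinear_equiv :: "'a::metric_space \<Rightarrow> ('a \<Rightarrow> real) \<Rightarrow> ('a \<Rightarrow> real) \<Rightarrow> bool" where
  "sublinear_equiv x0 f g \<longleftrightarrow>
     (\<lambda>n::nat. SUP x\<in>{x. dist x0 x \<ge> real n}. \<bar>f x - g x\<bar> / dist x0 x) \<longlonglongrightarrow> 0"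

end

theory Submission
  imports Defs
begin

(* At the points \<alpha>(s) one has \<alpha>^+(\<alpha>(s)) = -s, while for any x the Gromov product estimate
   d(\<beta> t, x) \<ge> d(o, x) + t - 2 d(o, [x, \<beta> t]) gives \<beta>^+(x) \<ge> d(o, x) - 2 limsup d(o, [x, \<beta> t]).
   Hence |\<alpha>^+ - \<beta>^+| is at least 2 (s_n - r_n) \<ge> 2 (1 - c) s_n at \<alpha>(s_n), for any c strictly
   between limsup r_n/s_n and 1: a linear lower bound at points escaping to infinity, which is
   incompatible with a sublinear difference. *)

lemma geodesic_ray_dist_base:
  assumes "geodesic_ray \<alpha> x0" "t \<ge> 0"
  shows "dist x0 (\<alpha> t) = t"
  using assms unfolding geodesic_ray_def by (metis abs_of_nonneg diff_zero dist_commute order_refl)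

lemma gromov_product_le_infdist_geodesic_segment:
  assumes "geodesic_segment \<gamma> x y"
  shows "dist p x + dist p y - dist x y \<le> 2 * infdist p (\<gamma> ` {0..dist x y})"
proof -
  let ?D = "dist x y"
  have "dist p x + dist p y - ?D \<le> 2 * dist p (\<gamma> u)" if u: "u \<in> {0..?D}" for u
  proof -
    have ends: "0 \<in> {0..?D}" "?D \<in> {0..?D}" using u by auto
    have "dist (\<gamma> 0) (\<gamma> u) = \<bar>0 - u\<bar>" "dist (\<gamma> u) (\<gamma> ?D) = \<bar>u - ?D\<bar>"
      using assms u ends unfolding geodesic_segment_def by blast+
    then have "dist x (\<gamma> u) = u" "dist (\<gamma> u) y = ?D - u"
      using assms u unfolding geodesic_segment_def by auto
    moreover have "dist p x \<le> dist p (\<gamma> u) + dist x (\<gamma> u)" "dist p y \<le> dist p (\<gamma> u) + dist (\<gamma> u) y"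
      by (rule dist_triangle2 dist_triangle)+
    ultimately show ?thesis by linarith
  qed
  then have "(dist p x + dist p y - ?D) / 2 \<le> (INF a\<in>\<gamma> ` {0..?D}. dist p a)"
    by (intro cINF_greatest) (auto simp: mult.commute)
  then show ?thesis by (simp add: infdist_notempty)
qed

lemma tendsto_at_top_antimono_on_Inf:
  fixes f :: "real \<Rightarrow> real"
  assumes mono: "antimono_on {a..} f" and bdd: "bdd_below (f ` {a..})"
  shows "(f \<longlongrightarrow> Inf (f ` {a..})) at_top"
proof (rule order_tendstoI)
  fix b assume "b < Inf (f ` {a..})"
  show "\<forall>\<^sub>F t in at_top. b < f t"
    using eventually_ge_at_top[of a]
    by eventually_elim (use bdd \<open>b < Inf _\<close> in \<open>auto intro: less_le_trans cInf_lower\<close>)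
next
  fix b assume "Inf (f ` {a..}) < b"
  then obtain t0 where t0: "t0 \<ge> a" "f t0 < b"
    using cInf_lessD[of "f ` {a..}" b] by auto
  show "\<forall>\<^sub>F t in at_top. f t < b"
    using eventually_ge_at_top[of t0]
  proof eventually_elim
    case (elim t)
    then have "f t \<le> f t0" using monotone_onD[OF mono, of t0 t] t0 by simp
    with t0 show ?case by simp
  qed
qed

lemma ray_horofunction_tendsto:
  assumes ray: "geodesic_ray \<beta> x0"
  shows "((\<lambda>t. dist (\<beta> t) y - t) \<longlongrightarrow> ray_horofunction \<beta> y) at_top"
proof -
  define f where "f t = dist (\<beta> t) y - t" for t
  have "f t \<le> f t0" if "t0 \<in> {0..}" "t \<in> {0..}" "t0 \<le> t" for t0 t
  proof -
    have "dist (\<beta> t) (\<beta> t0) = t - t0" using ray that unfolding geodesic_ray_def by auto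
    then show ?thesis unfolding f_def using dist_triangle[of "\<beta> t" y "\<beta> t0"] by linarith
  qed
  then have "antimono_on {0..} f" by (intro monotone_onI) auto
  moreover have "bdd_below (f ` {0..})"
  proof (rule bdd_belowI2)
    fix t :: real assume "t \<in> {0..}"
    then show "- dist x0 y \<le> f t"
      unfolding f_def using geodesic_ray_dist_base[OF ray, of t] dist_triangle[of x0 "\<beta> t" y]
      by (simp add: dist_commute)
  qed
  ultimately have "(f \<longlongrightarrow> Inf (f ` {0..})) at_top" by (rule tendsto_at_top_antimono_on_Inf)
  then show ?thesis unfolding ray_horofunction_def f_def by (simp add: tendsto_Lim)
qed

lemma ray_horofunction_abs_le:
  assumes ray: "geodesic_ray \<beta> x0"
  shows "\<bar>ray_horofunction \<beta> y\<bar> \<le> dist x0 y"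
proof -
  have "\<forall>\<^sub>F t in at_top. \<bar>dist (\<beta> t) y - t\<bar> \<le> dist x0 y"
    using eventually_ge_at_top[of 0]
  proof eventually_elim
    case (elim t)
    have "dist (\<beta> t) y \<le> dist x0 (\<beta> t) + dist x0 y" "dist x0 (\<beta> t) \<le> dist x0 y + dist (\<beta> t) y"
      by (metis dist_commute dist_triangle)+
    then show ?case using geodesic_ray_dist_base[OF ray elim] by (simp add: abs_le_iff)
  qed
  with tendsto_rabs[OF ray_horofunction_tendsto[OF ray]] show ?thesis
    by (rule tendsto_upperbound) simp
qed

lemma ray_horofunction_on_ray:
  assumes ray: "geodesic_ray \<alpha> x0" and "s \<ge> 0"
  shows "ray_horofunction \<alpha> (\<alpha> s) = - s"
proof -
  have "\<forall>\<^sub>F t in at_top. dist (\<alpha> t) (\<alpha> s) - t = - s"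
    using eventually_ge_at_top[of s]
    by eventually_elim (use ray \<open>s \<ge> 0\<close> in \<open>auto simp: geodesic_ray_def\<close>)
  then have "((\<lambda>t. dist (\<alpha> t) (\<alpha> s) - t) \<longlongrightarrow> - s) at_top" by (rule tendsto_eventually)
  from tendsto_unique[OF _ ray_horofunction_tendsto[OF ray] this] show ?thesis by simp
qed

lemma ray_horofunction_ge_by_segments:
  assumes ray: "geodesic_ray \<beta> x0"
    and seg: "\<forall>t. geodesic_segment (\<gamma> t) x (\<beta> t)"
    and near: "Limsup at_top (\<lambda>t. ereal (infdist x0 ((\<gamma> t) ` {0..dist x (\<beta> t)}))) \<le> ereal R"
  shows "dist x0 x - 2 * R \<le> ray_horofunction \<beta> x"
proof (rule field_le_epsilon)
  fix e :: real assume "e > 0"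
  then have "Limsup at_top (\<lambda>t. ereal (infdist x0 ((\<gamma> t) ` {0..dist x (\<beta> t)}))) < ereal (R + e / 2)"
    using near by (simp add: order_le_less_trans)
  then have "\<forall>\<^sub>F t in at_top. infdist x0 ((\<gamma> t) ` {0..dist x (\<beta> t)}) < R + e / 2"
    by (auto dest: Limsup_lessD)
  then have "\<forall>\<^sub>F t in at_top. dist x0 x - 2 * R - e \<le> dist (\<beta> t) x - t"
    using eventually_ge_at_top[of 0]
  proof eventually_elim
    case (elim t)
    then show ?case
      using gromov_product_le_infdist_geodesic_segment[OF seg[rule_format, of t], of x0]
        geodesic_ray_dist_base[OF ray, of t] by (simp add: dist_commute)
  qed
  with ray_horofunction_tendsto[OF ray] have "dist x0 x - 2 * R - e \<le> ray_horofunction \<beta> x"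
    by (rule tendsto_lowerbound) simp
  then show "dist x0 x - 2 * R \<le> ray_horofunction \<beta> x + e" by simp
qed

lemma sublinear_equivD:
  assumes equiv: "sublinear_equiv x0 f g"
    and bound: "\<And>x. \<bar>f x - g x\<bar> \<le> C * dist x0 x" and "e > 0"
  obtains N :: nat where "\<And>x. real N \<le> dist x0 x \<Longrightarrow> \<bar>f x - g x\<bar> \<le> e * dist x0 x"
proof -
  define q where "q x = \<bar>f x - g x\<bar> / dist x0 x" for x
  have q_le: "q x \<le> max C 0" for x
  proof (cases "dist x0 x = 0")
    case False
    have "\<bar>f x - g x\<bar> \<le> max C 0 * dist x0 x"
      by (rule order_trans[OF bound]) (simp add: mult_right_mono)
    with False show ?thesis by (simp add: q_def pos_divide_le_eq)
  qed (simp add: q_def)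
  have "(\<lambda>n::nat. SUP x\<in>{x. real n \<le> dist x0 x}. q x) \<longlonglongrightarrow> 0"
    using equiv unfolding sublinear_equiv_def q_def .
  from order_tendstoD(2)[OF this \<open>e > 0\<close>]
  obtain N :: nat where N: "(SUP x\<in>{x. real N \<le> dist x0 x}. q x) < e"
    by (auto simp: eventually_sequentially)
  have "\<bar>f x - g x\<bar> \<le> e * dist x0 x" if "real N \<le> dist x0 x" for x
  proof (cases "dist x0 x = 0")
    case True
    then show ?thesis using bound[of x] by simp
  next
    case False
    have "q x \<le> (SUP x\<in>{x. real N \<le> dist x0 x}. q x)"
      using that q_le by (intro cSUP_upper bdd_aboveI2) auto
    with N have "q x < e" by linarith
    with False show ?thesis by (simp add: q_def pos_divide_less_eq)
  qed
  then show thesis by (rule that)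
qed

theorem lemma2p5:
  fixes x0 :: "'a::metric_space" and \<alpha> \<beta> :: "real \<Rightarrow> 'a" and s r :: "nat \<Rightarrow> real"
  assumes "proper_space TYPE('a)" and "geodesic_space TYPE('a)"
    and "geodesic_ray \<alpha> x0" and "geodesic_ray \<beta> x0"
    and "filterlim s at_top sequentially" and "filterlim r at_top sequentially"
    and "limsup (\<lambda>n. ereal (r n / s n)) < 1"
    and "\<forall>\<^sub>F n in sequentially. \<exists>\<gamma> :: real \<Rightarrow> real \<Rightarrow> 'a.
           (\<forall>t. geodesic_segment (\<gamma> t) (\<alpha> (s n)) (\<beta> t)) \<and>
           Limsup at_top (\<lambda>t. ereal (infdist x0 ((\<gamma> t) ` {0..dist (\<alpha> (s n)) (\<beta> t)}))) \<le> ereal (r n)"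
  shows "\<not> sublinear_equiv x0 (ray_horofunction \<alpha>) (ray_horofunction \<beta>)"
proof
  note ray\<alpha> = assms(3) and ray\<beta> = assms(4)
  assume "sublinear_equiv x0 (ray_horofunction \<alpha>) (ray_horofunction \<beta>)"
  obtain c where c: "limsup (\<lambda>n. ereal (r n / s n)) < ereal c" "c < 1"
    using assms(7) by (metis ereal_dense2 ereal_less(3))
  have "\<bar>ray_horofunction \<alpha> x - ray_horofunction \<beta> x\<bar> \<le> 2 * dist x0 x" for x
    using ray_horofunction_abs_le[OF ray\<alpha>, of x] ray_horofunction_abs_le[OF ray\<beta>, of x] by linarith
  from sublinear_equivD[OF \<open>sublinear_equiv _ _ _\<close> this, of "2 * (1 - c)"] c(2)
  obtain N :: nat where N: "\<And>x. real N \<le> dist x0 x \<Longrightarrow>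
      \<bar>ray_horofunction \<alpha> x - ray_horofunction \<beta> x\<bar> \<le> 2 * (1 - c) * dist x0 x" by auto
  have "\<forall>\<^sub>F n in sequentially. max 1 (real N) \<le> s n"
    using assms(5) unfolding filterlim_at_top by blast
  then have "\<forall>\<^sub>F n in sequentially. r n / s n < c \<and> max 1 (real N) \<le> s n"
    using Limsup_lessD[OF c(1)] by eventually_elim simp
  from eventually_happens'[OF sequentially_bot eventually_conj[OF this assms(8)]]
  obtain n \<gamma> where n: "r n / s n < c" "max 1 (real N) \<le> s n"
      and seg: "\<forall>t. geodesic_segment (\<gamma> t) (\<alpha> (s n)) (\<beta> t)"
      and near: "Limsup at_top (\<lambda>t. ereal (infdist x0 ((\<gamma> t) ` {0..dist (\<alpha> (s n)) (\<beta> t)}))) \<le> ereal (r n)"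
    by blast
  have dist_eq: "dist x0 (\<alpha> (s n)) = s n" using geodesic_ray_dist_base[OF ray\<alpha>] n(2) by simp
  have "ray_horofunction \<alpha> (\<alpha> (s n)) = - s n" using ray_horofunction_on_ray[OF ray\<alpha>] n(2) by simp
  moreover have "s n - 2 * r n \<le> ray_horofunction \<beta> (\<alpha> (s n))"
    using ray_horofunction_ge_by_segments[OF ray\<beta> seg near] dist_eq by simp
  moreover have "r n < c * s n" using n by (simp add: divide_less_eq)
  moreover have "\<bar>ray_horofunction \<alpha> (\<alpha> (s n)) - ray_horofunction \<beta> (\<alpha> (s n))\<bar> \<le> 2 * (1 - c) * s n"
    using N[of "\<alpha> (s n)"] dist_eq n(2) by simp
  ultimately show False by (simp add: algebra_simps)
qed

end
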